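(* For every integer $k\ge2$, $\inf_{x\in\Delta^{d-1}}F^k(x)=12\cdot3^{k-1}-3$, and this value is attained at the barycenter $x=(1/d,\dots,1/d)$.
   Context: Fix $k\ge2$ and $d=4\cdot3^{k-1}$. $\Delta^{d-1}=\{x\in\mathbb{R}^d: x_i>0,\ \sum_i x_i=1\}$. For $j=1,2,3,4$, $I_j=\{(j-1)3^{k-1}+1,\dots,j\cdot3^{k-1}\}$ and $\Sigma_j(x)=\sum_{l\in I_j}x_l$. Let $\sigma(t)=(1-t)/t$. For $i\in\{1,\dots,d\}$ let $j(i)=1,4,3,2$ according as $i\equiv0,1,2,3\pmod4$, $f_i(x)=\sigma(\Sigma_{j(i)}(x))\sigma(x_i)$, and $F^k(x)=\max_{1\le i\le d}f_i(x)$. *)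

theory Defs
  imports Complex_Main
begin

definition dimk :: "nat \<Rightarrow> nat" where
  "dimk k = 4 * 3 ^ (k - 1)"

text \<open>The open simplex, vectors represented as functions nat => real on indices 1..d.\<close>
definition simplex :: "nat \<Rightarrow> (nat \<Rightarrow> real) set" where
  "simplex k = {x. (\<forall>i\<in>{1..dimk k}. x i > 0) \<and> (\<Sum>i=1..dimk k. x i) = 1}"

definition blocksum :: "nat \<Rightarrow> (nat \<Rightarrow> real) \<Rightarrow> nat \<Rightarrow> real" where
  "blocksum k x j = (\<Sum>l=(j-1)*3^(k-1)+1..j*3^(k-1). x l)"

definition sigma :: "real \<Rightarrow> real" where
  "sigma t = (1 - t) / t"

definition jidx :: "nat \<Rightarrow> nat" where
  "jidx i = (if i mod 4 = 0 then 1 else if i mod 4 = 1 then 4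
             else if i mod 4 = 2 then 3 else 2)"

definition fcomp :: "nat \<Rightarrow> (nat \<Rightarrow> real) \<Rightarrow> nat \<Rightarrow> real" where
  "fcomp k x i = sigma (blocksum k x (jidx i)) * sigma (x i)"

definition Fk :: "nat \<Rightarrow> (nat \<Rightarrow> real) \<Rightarrow> real" where
  "Fk k x = Max ((fcomp k x) ` {1..dimk k})"

end

theory Submission
  imports Defs
begin

text \<open>Write \<open>d = dimk k\<close> and \<open>m = d/4\<close>. Suppose \<open>F\<^sup>k(x) < 3(d - 1)\<close>. For a single
  index with block sum \<open>s\<close>, the condition \<open>\<sigma>(s)\<sigma>(x\<^sub>i) < 3(d - 1)\<close> means
  \<open>x\<^sub>i > (1 - s)/(1 + (3d - 4)s)\<close>, a convex function of \<open>s\<close>, hence \<open>x\<^sub>i\<close> exceeds its tangent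
  line \<open>L\<close> at \<open>s = 1/4\<close>. Every block is the target \<open>j(i)\<close> of exactly \<open>m\<close> indices, so summing
  gives \<open>1 = \<Sum> x\<^sub>i > m \<Sum>\<^sub>j L(\<Sigma>\<^sub>j) = 1\<close>, since \<open>L\<close> is affine and \<open>\<Sum>\<^sub>j \<Sigma>\<^sub>j = 1\<close>.
  At the barycenter every \<open>f\<^sub>i\<close> equals \<open>\<sigma>(1/4)\<sigma>(1/d) = 3(d - 1)\<close>.\<close>

lemma sigma_mult_less_imp_gt_tangent:
  fixes d s x :: real
  assumes d: "d \<ge> 4/3" and s: "s > 0" and x: "x > 0"
    and less: "(1 - s) / s * ((1 - x) / x) < 3 * (d - 1)"
  shows "x > 1/d - 16 * (d - 1) / (3 * d^2) * (s - 1/4)"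
proof -
  have "(1 - s) * (1 - x) < 3 * (d - 1) * (s * x)"
    using less s x by (simp add: divide_less_eq)
  then have upper: "1 - s < (1 + (3*d - 4) * s) * x" by (simp add: algebra_simps)
  have "(1 - s) - (1 + (3*d - 4) * s) * (1/d - 16 * (d - 1) / (3 * d^2) * (s - 1/4))
      = 16 * (3*d - 4) * (3*d - 3) * (s - 1/4)^2 / (9 * d^2)"
    using d by (simp add: field_simps power2_eq_square)
  moreover have "16 * (3*d - 4) * (3*d - 3) * (s - 1/4)^2 / (9 * d^2) \<ge> 0"
    using d by simp
  ultimately have "(1 + (3*d - 4) * s) * (1/d - 16 * (d - 1) / (3 * d^2) * (s - 1/4))
      < (1 + (3*d - 4) * s) * x"
    using upper by linarith
  moreover have "1 + (3*d - 4) * s > 0" using d s by (simp add: add_pos_nonneg)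
  ultimately show ?thesis by simp
qed

lemma sum_jidx:
  fixes h :: "nat \<Rightarrow> 'a::comm_semiring_1"
  shows "(\<Sum>i=1..4*m. h (jidx i)) = of_nat m * (h 1 + h 2 + h 3 + h 4)"
proof (induction m)
  case 0
  then show ?case by simp
next
  case (Suc m)
  have "Suc (4*m) mod 4 = 1" "Suc (Suc (4*m)) mod 4 = 2" "Suc (Suc (Suc (4*m))) mod 4 = 3"
    "Suc (Suc (Suc (Suc (4*m)))) mod 4 = 0" by presburger+
  then have "jidx (Suc (4*m)) = 4" "jidx (Suc (Suc (4*m))) = 3"
    "jidx (Suc (Suc (Suc (4*m)))) = 2" "jidx (Suc (Suc (Suc (Suc (4*m))))) = 1"
    by (simp_all add: jidx_def)
  moreover have "4 * Suc m = Suc (Suc (Suc (Suc (4*m))))" by simp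
  ultimately show ?case using Suc by (simp only:) (simp add: sum.cl_ivl_Suc algebra_simps)
qed

lemma sum_consecutive_blocks:
  fixes x :: "nat \<Rightarrow> 'a::comm_monoid_add"
  shows "(\<Sum>j=1..n. \<Sum>l=(j-1)*m+1..j*m. x l) = (\<Sum>l=1..n*m. x l)"
proof (induction n)
  case 0
  then show ?case by simp
next
  case (Suc n)
  have "{1..Suc n * m} = {1..n*m} \<union> {n*m+1..Suc n * m}"
    and "{1..n*m} \<inter> {n*m+1..Suc n * m} = {}" by auto
  then have "(\<Sum>l=1..Suc n * m. x l) = (\<Sum>l=1..n*m. x l) + (\<Sum>l=n*m+1..Suc n * m. x l)"
    by (simp add: sum.union_disjoint)
  then show ?case using Suc by simp
qed

lemma dimk_eq: "dimk k = 4 * 3^(k-1)"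
  by (simp add: dimk_def)

lemma blocksum_eq: "blocksum k x j = (\<Sum>l=(j-1)*3^(k-1)+1..j*3^(k-1). x l)"
  by (simp add: blocksum_def)

lemma jidx_bounds: "1 \<le> jidx i" "jidx i \<le> 4"
  by (auto simp: jidx_def)

lemma sum_blocksum: "(\<Sum>j=1..4. blocksum k x j) = (\<Sum>l=1..dimk k. x l)"
  using sum_consecutive_blocks[where n=4 and m="3^(k-1)" and x=x] by (simp add: blocksum_eq dimk_eq)

lemma blocksum_pos:
  assumes "x \<in> simplex k" and "1 \<le> j" and "j \<le> 4"
  shows "blocksum k x j > 0"
proof -
  have "{(j-1)*3^(k-1)+1..j*3^(k-1)} \<subseteq> {1..dimk k}"
    using assms(3) by (auto simp: dimk_eq intro: order.trans[OF _ mult_le_mono1])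
  moreover have "{(j-1)*3^(k-1)+1..j*3^(k-1)} \<noteq> {}"
    using assms(2) by (cases j) auto
  ultimately show ?thesis
    using assms(1) unfolding blocksum_eq simplex_def by (intro sum_pos) auto
qed

definition barycenter :: "nat \<Rightarrow> nat \<Rightarrow> real" where
  "barycenter k = (\<lambda>i. 1 / real (dimk k))"

lemma barycenter_in_simplex: "barycenter k \<in> simplex k"
  by (simp add: simplex_def barycenter_def dimk_eq)

lemma blocksum_barycenter:
  assumes "1 \<le> j"
  shows "blocksum k (barycenter k) j = 1/4"
proof -
  have "card {(j-1)*3^(k-1)+1..j*3^(k-1)} = 3^(k-1)"
    using assms by (cases j) (auto simp: algebra_simps)
  then show ?thesis by (simp add: blocksum_eq barycenter_def dimk_eq)
qed

lemma Fk_barycenter: "Fk k (barycenter k) = 3 * (real (dimk k) - 1)"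
proof -
  have "sigma (barycenter k i) = real (dimk k) - 1" for i
    by (simp add: sigma_def barycenter_def dimk_eq field_simps)
  moreover have "sigma (blocksum k (barycenter k) (jidx i)) = 3" for i
    unfolding sigma_def blocksum_barycenter[OF jidx_bounds(1)] by simp
  ultimately have "fcomp k (barycenter k) i = 3 * (real (dimk k) - 1)" for i
    by (simp add: fcomp_def)
  moreover have "{1..dimk k} \<noteq> {}" by (simp add: dimk_eq)
  ultimately have "fcomp k (barycenter k) ` {1..dimk k} = {3 * (real (dimk k) - 1)}"
    by auto
  then show ?thesis by (simp add: Fk_def)
qed

lemma Fk_ge:
  assumes x: "x \<in> simplex k"
  shows "Fk k x \<ge> 3 * (real (dimk k) - 1)"
proof (rule ccontr)
  define d where "d = real (dimk k)"
  define c where "c = 16 * (d - 1) / (3 * d^2)"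
  define L where "L = (\<lambda>s. 1/d - c * (s - 1/4))"
  assume "\<not> ?thesis"
  then have less: "Fk k x < 3 * (d - 1)" by (simp add: d_def)
  have "4 \<le> dimk k" by (simp add: dimk_eq)
  then have d: "d \<ge> 4/3" by (simp add: d_def)
  have x_pos: "x i > 0" if "i \<in> {1..dimk k}" for i
    using x that by (simp add: simplex_def)
  have x_sum: "(\<Sum>i=1..dimk k. x i) = 1"
    using x by (simp add: simplex_def)
  have blocks_sum: "(\<Sum>j=1..4. blocksum k x j) = 1"
    using sum_blocksum[of k x] x_sum by simp
  have above: "x i > L (blocksum k x (jidx i))" if i: "i \<in> {1..dimk k}" for i
  proof -
    have "fcomp k x i \<le> Fk k x" unfolding Fk_def using i by (intro Max_ge) auto
    with less have "fcomp k x i < 3 * (d - 1)" by simp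
    then show ?thesis unfolding L_def c_def fcomp_def sigma_def
      using sigma_mult_less_imp_gt_tangent[OF d blocksum_pos[OF x jidx_bounds] x_pos[OF i]]
      by blast
  qed
  have "(\<Sum>i=1..dimk k. L (blocksum k x (jidx i)))
      = 3^(k-1) * (L (blocksum k x 1) + L (blocksum k x 2) + L (blocksum k x 3) + L (blocksum k x 4))"
    using sum_jidx[where h = "\<lambda>j. L (blocksum k x j)" and m = "3^(k-1)"]
    by (simp add: dimk_eq)
  also have "\<dots> = 3^(k-1) * (4/d - c * ((\<Sum>j=1..4. blocksum k x j) - 1))"
    by (simp add: L_def numeral_eq_Suc algebra_simps)
  also have "\<dots> = 1"
    unfolding blocks_sum by (simp add: d_def dimk_eq)
  also have "\<dots> = (\<Sum>i=1..dimk k. x i)"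
    by (rule x_sum[symmetric])
  finally show False
    using sum_strict_mono[of "{1..dimk k}" "\<lambda>i. L (blocksum k x (jidx i))" x] above
    by (simp add: dimk_eq)
qed

theorem mainTheorem11:
  fixes k :: nat
  assumes "k \<ge> 2"
  shows "(INF x\<in>simplex k. Fk k x) = 12 * 3 ^ (k - 1) - 3
         \<and> (\<lambda>i. 1 / real (dimk k)) \<in> simplex k
         \<and> Fk k (\<lambda>i. 1 / real (dimk k)) = 12 * 3 ^ (k - 1) - 3"
proof -
  \<comment> \<open>The argument works for every \<open>k\<close>.\<close>
  have min_value: "3 * (real (dimk k) - 1) = 12 * 3 ^ (k - 1) - 3"
    by (simp add: dimk_eq)
  have "(INF x\<in>simplex k. Fk k x) = Fk k (barycenter k)"
    by (rule cInf_eq_minimum)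
      (use barycenter_in_simplex Fk_barycenter Fk_ge in
        \<open>auto intro: image_eqI[where x = "barycenter k"]\<close>)
  then show ?thesis
    using barycenter_in_simplex[of k] Fk_barycenter[of k]
    unfolding min_value barycenter_def by simp
qed

end
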